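(* Let $\mathcal{X}$ and $\mathcal{Y}$ be finite sets with $2 \le |\mathcal{X}|,|\mathcal{Y}| < \infty$, and let $X,Y$ have joint pmf $P_{X,Y}$ with $P_X(x)>0$ for all $x\in\mathcal{X}$ and $P_Y(y)>0$ for all $y\in\mathcal{Y}$. Then $$\eta_{\chi^2}(P_X,P_{Y|X}) \le \eta_{\mathrm{KL}}(P_X,P_{Y|X}) \le \frac{\eta_{\chi^2}(P_X,P_{Y|X})}{\min_{x\in\mathcal{X}}P_X(x)}.$$
   Context: Let $W$ be the column stochastic matrix of the channel $P_{Y|X}$ (its $x$th column is $P_{Y|X=x}$), mapping a pmf $R_X$ on $\mathcal{X}$ to $WR_X$ on $\mathcal{Y}$. The KL divergence is $D(R_X\|P_X)=\sum_x R_X(x)\log(R_X(x)/P_X(x))$ (natural log), and the $\chi^2$-divergence is $\chi^2(R_X\|P_X)=\sum_x (R_X(x)-P_X(x))^2/P_X(x)$. For a divergence $D_\bullet$ in $\{D,\chi^2\}$, the contraction coefficient is $\eta_\bullet(P_X,P_{Y|X})=\sup\{D_\bullet(WR_X\|WP_X)/D_\bullet(R_X\|P_X): R_X \text{ a pmf on } \mathcal{X},\ 0<D_\bullet(R_X\|P_X)<\infty\}$; $\eta_{\mathrm{KL}}$ is the one for KL divergence and $\eta_{\chi^2}$ the one for $\chi^2$-divergence. *)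

theory Defs
  imports Complex_Main "HOL-Library.Cardinality"
begin

definition is_pmf :: "('a::finite \<Rightarrow> real) \<Rightarrow> bool" where
  "is_pmf R \<longleftrightarrow> (\<forall>x. 0 \<le> R x) \<and> (\<Sum>x\<in>UNIV. R x) = 1"

definition kl_div :: "('a::finite \<Rightarrow> real) \<Rightarrow> ('a \<Rightarrow> real) \<Rightarrow> real" where
  "kl_div R P = (\<Sum>x\<in>UNIV. if R x = 0 then 0 else R x * ln (R x / P x))"

definition chi2_div :: "('a::finite \<Rightarrow> real) \<Rightarrow> ('a \<Rightarrow> real) \<Rightarrow> real" where
  "chi2_div R P = (\<Sum>x\<in>UNIV. (R x - P x)^2 / P x)"

definition marg_X :: "('x::finite \<Rightarrow> 'y::finite \<Rightarrow> real) \<Rightarrow> 'x \<Rightarrow> real" where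
  "marg_X P x = (\<Sum>y\<in>UNIV. P x y)"

definition marg_Y :: "('x::finite \<Rightarrow> 'y::finite \<Rightarrow> real) \<Rightarrow> 'y \<Rightarrow> real" where
  "marg_Y P y = (\<Sum>x\<in>UNIV. P x y)"

definition channel :: "('x::finite \<Rightarrow> 'y::finite \<Rightarrow> real) \<Rightarrow> 'y \<Rightarrow> 'x \<Rightarrow> real" where
  "channel P y x = P x y / marg_X P x"

definition channel_apply :: "('x::finite \<Rightarrow> 'y::finite \<Rightarrow> real) \<Rightarrow> ('x \<Rightarrow> real) \<Rightarrow> 'y \<Rightarrow> real" where
  "channel_apply P R y = (\<Sum>x\<in>UNIV. channel P y x * R x)"

text \<open>Since P_X > 0 and P_Y > 0 are assumed,
  both divergences are always finite, so the condition D < infinity is automatic.\<close>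
definition contraction_coeff ::
  "(('x::finite \<Rightarrow> real) \<Rightarrow> ('x \<Rightarrow> real) \<Rightarrow> real) \<Rightarrow>
   (('y::finite \<Rightarrow> real) \<Rightarrow> ('y \<Rightarrow> real) \<Rightarrow> real) \<Rightarrow>
   ('x \<Rightarrow> 'y \<Rightarrow> real) \<Rightarrow> real" where
  "contraction_coeff DivX DivY P =
     Sup {DivY (channel_apply P R) (channel_apply P (marg_X P)) / DivX R (marg_X P) | R.
           is_pmf R \<and> 0 < DivX R (marg_X P)}"

definition eta_KL :: "('x::finite \<Rightarrow> 'y::finite \<Rightarrow> real) \<Rightarrow> real" where
  "eta_KL P = contraction_coeff kl_div kl_div P"

definition eta_chi2 :: "('x::finite \<Rightarrow> 'y::finite \<Rightarrow> real) \<Rightarrow> real" where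
  "eta_chi2 P = contraction_coeff chi2_div chi2_div P"

end

theory Submission
  imports Defs "HOL-Analysis.Convex" "HOL-Real_Asymp.Real_Asymp"
begin

text \<open>
  The lower bound: perturbing the input distribution \<open>P\<^sub>X\<close> in a direction \<open>R - P\<^sub>X\<close> by
  a small amount \<open>\<epsilon>\<close> makes both KL divergences behave like \<open>\<epsilon>\<^sup>2/2\<close> times the corresponding
  \<open>\<chi>\<^sup>2\<close>-divergences, so every \<open>\<chi>\<^sup>2\<close>-ratio is a limit of KL-ratios.
  The upper bound: \<open>D(WR\<parallel>P\<^sub>Y) \<le> \<chi>\<^sup>2(WR\<parallel>P\<^sub>Y) \<le> \<eta>\<^sub>\<chi>\<^sub>2 \<chi>\<^sup>2(R\<parallel>P\<^sub>X)\<close>, while Pinsker's inequality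
  together with \<open>\<parallel>v\<parallel>\<^sub>2\<^sup>2 \<le> \<parallel>v\<parallel>\<^sub>1\<^sup>2/2\<close> for zero-sum \<open>v\<close> gives
  \<open>min P\<^sub>X \<cdot> \<chi>\<^sup>2(R\<parallel>P\<^sub>X) \<le> \<parallel>R - P\<^sub>X\<parallel>\<^sub>2\<^sup>2 \<le> D(R\<parallel>P\<^sub>X)\<close>.
\<close>

lemma ln_ge_rational:
  fixes t :: real
  assumes "t > 0"
  shows "(5*t^2 - 4*t - 1) / (2*t^2 + 4*t) \<le> ln t"
proof -
  define g where "g x = ln x - (5*x^2 - 4*x - 1) / (2*x^2 + 4*x)" for x :: real
  have g_deriv: "DERIV g x :> 4*(x-1)^3 / (2*x^2 + 4*x)^2" if "x > 0" for x
  proof -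
    have nz: "2*x^2 + 4*x \<noteq> 0"
      using that by (simp add: add_pos_pos order.strict_implies_not_eq[symmetric])
    have "DERIV g x :> 1/x - ((10*x-4)*(2*x^2+4*x) - (5*x^2-4*x-1)*(4*x+4)) / (2*x^2+4*x)^2"
      unfolding g_def using that nz
      by (auto intro!: derivative_eq_intros simp: field_simps power2_eq_square)
    also have "1/x = (x*(2*x+4)^2) / (2*x^2+4*x)^2"
      using that nz by (simp add: field_simps) (simp add: power2_eq_square algebra_simps)
    also have "x*(2*x+4)^2 - ((10*x-4)*(2*x^2+4*x) - (5*x^2-4*x-1)*(4*x+4)) = 4*(x-1)^3"
      by (simp add: algebra_simps power2_eq_square power3_eq_cube)
    ultimately show ?thesis
      by (simp add: diff_divide_distrib[symmetric])
  qed
  have g_cont: "continuous_on {a..b} g" if "a > 0" for a b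
    using that by (intro continuous_at_imp_continuous_on ballI DERIV_isCont[OF g_deriv]) auto
  have "g 1 \<le> g t"
  proof (cases "t \<ge> 1")
    case True
    show ?thesis
    proof (rule DERIV_nonneg_imp_increasing_open[OF True _ g_cont])
      fix x assume "1 < x" "x < t"
      then show "\<exists>y. DERIV g x :> y \<and> y \<ge> 0"
        using g_deriv[of x] by (intro exI[of _ "4*(x-1)^3 / (2*x^2 + 4*x)^2"]) auto
    qed simp
  next
    case False
    show ?thesis
    proof (rule DERIV_nonpos_imp_decreasing_open[of t 1 g, OF _ _ g_cont[OF assms]])
      fix x assume "t < x" "x < 1"
      then have "4*(x-1)^3 / (2*x^2 + 4*x)^2 \<le> 0"
        by (intro divide_nonpos_nonneg) (auto simp: power_le_zero_eq)
      then show "\<exists>y. DERIV g x :> y \<and> y \<le> 0"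
        using g_deriv[of x] \<open>t < x\<close> assms by auto
    qed (use False in auto)
  qed
  then show ?thesis
    by (simp add: g_def)
qed

definition rel_entr :: "real \<Rightarrow> real \<Rightarrow> real" where
  "rel_entr r q = (if r = 0 then 0 else r * ln (r / q))"

lemma kl_div_eq_sum_rel_entr: "kl_div R Q = (\<Sum>x\<in>UNIV. rel_entr (R x) (Q x))"
  by (simp add: kl_div_def rel_entr_def)

lemma rel_entr_lower_bound:
  fixes r q :: real
  assumes "r \<ge> 0" "q > 0"
  shows "3*(r-q)^2 / (2*(r + 2*q)) \<le> rel_entr r q - r + q"
proof (cases "r = 0")
  case True
  then show ?thesis
    using assms by (simp add: rel_entr_def power2_eq_square)
next
  case False
  define t where "t = r / q"
  have t: "t > 0" "r = t * q"
    using False assms by (auto simp: t_def)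
  have "2*t^2 + 4*t > 0" "t*q + 2*q > 0"
    using t assms by (auto intro: add_pos_pos)
  then have "3*(r-q)^2 / (2*(r + 2*q)) + r - q = r * ((5*t^2 - 4*t - 1) / (2*t^2 + 4*t))"
    unfolding t(2) by (simp add: field_simps) (simp add: power2_eq_square algebra_simps)
  also have "\<dots> \<le> r * ln t"
    using t assms by (intro mult_left_mono ln_ge_rational) auto
  finally show ?thesis
    using False by (simp add: rel_entr_def t_def)
qed

lemma rel_entr_upper_bound:
  fixes r q :: real
  assumes "r \<ge> 0" "q > 0"
  shows "rel_entr r q \<le> (r-q)^2 / q + (r - q)"
proof (cases "r = 0")
  case True
  then show ?thesis
    using assms by (simp add: rel_entr_def power2_eq_square)
next
  case False
  then have "r * ln (r/q) \<le> r * (r/q - 1)"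
    using assms by (intro mult_left_mono ln_le_minus_one) auto
  also have "\<dots> = (r-q)^2 / q + (r - q)"
    using assms by (simp add: field_simps power2_eq_square)
  finally show ?thesis
    using False by (simp add: rel_entr_def)
qed

lemma xlnx_second_order: "((\<lambda>s::real. ((1 + s) * ln (1 + s) - s) / s^2) \<longlongrightarrow> 1/2) (at 0)"
  by real_asymp

lemma rel_entr_perturb_tendsto:
  fixes q v :: real
  assumes "q > 0"
  shows "((\<lambda>e. (rel_entr (q + e*v) q - e*v) / e^2) \<longlongrightarrow> v^2 / (2*q)) (at 0)"
proof (cases "v = 0")
  case True
  then show ?thesis
    using assms by (simp add: rel_entr_def)
next
  case False
  define \<phi> where "\<phi> s = ((1 + s) * ln (1 + s) - s) / s^2" for s :: real
  have s_lim: "filterlim (\<lambda>e. e * v / q) (at 0) (at 0)"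
  proof (rule filterlim_atI)
    show "((\<lambda>e. e * v / q) \<longlongrightarrow> 0) (at 0)"
      using assms by (auto intro!: tendsto_eq_intros)
    show "\<forall>\<^sub>F e in at 0. e * v / q \<noteq> 0"
      using eventually_neq_at_within[of 0 0] by eventually_elim (use False assms in auto)
  qed
  have "((\<lambda>e. v^2 / q * \<phi> (e * v / q)) \<longlongrightarrow> v^2 / q * (1/2)) (at 0)"
    by (intro tendsto_mult tendsto_const filterlim_compose[OF xlnx_second_order[folded \<phi>_def] s_lim])
  then have lim: "((\<lambda>e. v^2 / q * \<phi> (e * v / q)) \<longlongrightarrow> v^2 / (2*q)) (at 0)"
    by (simp add: mult.commute)
  have eq: "\<forall>\<^sub>F e in at 0. v^2 / q * \<phi> (e * v / q) = (rel_entr (q + e*v) q - e*v) / e^2"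
  proof -
    have "\<forall>\<^sub>F e in at 0. q + e*v > 0"
      using assms by (intro order_tendstoD(1)[where a = 0]) (auto intro!: tendsto_eq_intros)
    then show ?thesis
      using eventually_neq_at_within[of 0 0]
    proof eventually_elim
      case (elim e)
      define s where "s = e * v / q"
      have s: "(q + e*v) / q = 1 + s" "q + e*v = q * (1 + s)" "e*v = q * s" "s \<noteq> 0"
        using assms False elim by (auto simp: s_def field_simps)
      have "rel_entr (q + e*v) q - e*v = q * ((1 + s) * ln (1 + s) - s)"
        using elim(1) unfolding rel_entr_def s(1) by (simp add: s(2,3) algebra_simps)
      also have "\<dots> = q * s^2 * \<phi> s"
        using s(4) by (simp add: \<phi>_def)
      also have "q * s^2 = e^2 * (v^2 / q)"
        using assms by (simp add: s_def power_divide power_mult_distrib power2_eq_square)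
      finally show ?case
        using elim(2) by (simp add: s_def)
    qed
  qed
  from lim show ?thesis
    by (rule tendsto_cong[OF eq, THEN iffD1])
qed

lemma kl_div_mixture_tendsto:
  fixes R Q :: "'a::finite \<Rightarrow> real"
  assumes "\<And>x. Q x > 0" and "sum R UNIV = sum Q UNIV"
  shows "((\<lambda>e. kl_div (\<lambda>x. Q x + e * (R x - Q x)) Q / e^2) \<longlongrightarrow> chi2_div R Q / 2) (at 0)"
proof -
  have "kl_div (\<lambda>x. Q x + e * (R x - Q x)) Q / e^2
      = (\<Sum>x\<in>UNIV. (rel_entr (Q x + e * (R x - Q x)) (Q x) - e * (R x - Q x)) / e^2)" for e
  proof -
    have "(\<Sum>x\<in>UNIV. e * (R x - Q x)) = 0"
      using assms(2) by (simp add: sum_distrib_left[symmetric] sum_subtractf)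
    then show ?thesis
      by (simp add: kl_div_eq_sum_rel_entr sum_subtractf sum_divide_distrib[symmetric])
  qed
  moreover have "chi2_div R Q / 2 = (\<Sum>x\<in>UNIV. (R x - Q x)^2 / (2 * Q x))"
    by (simp add: chi2_div_def sum_divide_distrib ac_simps)
  ultimately show ?thesis
    using assms(1) by (simp only:) (intro tendsto_sum rel_entr_perturb_tendsto)
qed

lemma sum_power2_le_half_sum_abs_power2:
  fixes d :: "'a::finite \<Rightarrow> real"
  assumes "sum d UNIV = 0"
  shows "(\<Sum>x\<in>UNIV. (d x)^2) \<le> (\<Sum>x\<in>UNIV. \<bar>d x\<bar>)^2 / 2"
proof -
  define S where "S = (\<Sum>x\<in>UNIV. \<bar>d x\<bar>)"
  have entry_le: "2 * \<bar>d x\<bar> \<le> S" for x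
  proof -
    have "\<bar>d x\<bar> = \<bar>sum d (UNIV - {x})\<bar>"
      using assms sum.remove[of UNIV x d] by simp
    also have "\<dots> \<le> sum (\<lambda>y. \<bar>d y\<bar>) (UNIV - {x})"
      by (rule sum_abs)
    finally show ?thesis
      unfolding S_def using sum.remove[of UNIV x "\<lambda>y. \<bar>d y\<bar>"] by simp
  qed
  have "(\<Sum>x\<in>UNIV. (d x)^2) \<le> (\<Sum>x\<in>UNIV. \<bar>d x\<bar> * (S/2))"
  proof (rule sum_mono)
    fix x
    have "(d x)^2 = \<bar>d x\<bar> * \<bar>d x\<bar>"
      by (simp add: power2_eq_square abs_mult[symmetric])
    also have "\<dots> \<le> \<bar>d x\<bar> * (S/2)"
      using entry_le[of x] by (intro mult_left_mono) auto
    finally show "(d x)^2 \<le> \<bar>d x\<bar> * (S/2)" .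
  qed
  also have "\<dots> = (\<Sum>x\<in>UNIV. \<bar>d x\<bar>) * (S/2)"
    by (rule sum_distrib_right[symmetric])
  also have "\<dots> = S^2 / 2"
    by (simp add: S_def power2_eq_square)
  finally show ?thesis
    by (simp add: S_def)
qed

lemma pinsker_inequality:
  fixes R Q :: "'a::finite \<Rightarrow> real"
  assumes R: "is_pmf R" and Q: "is_pmf Q" and Q_pos: "\<And>x. Q x > 0"
  shows "(\<Sum>x\<in>UNIV. \<bar>R x - Q x\<bar>)^2 \<le> 2 * kl_div R Q"
proof -
  \<comment> \<open>Cauchy--Schwarz with the weights \<open>R + 2Q\<close> of total mass 3 matches the termwise bound
    \<open>rel_entr_lower_bound\<close>.\<close>
  define w where "w x = R x + 2 * Q x" for x
  have w_pos: "w x > 0" for x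
    using R Q_pos[of x] by (simp add: w_def is_pmf_def add_nonneg_pos)
  have "(\<Sum>x\<in>UNIV. \<bar>R x - Q x\<bar>)^2 = (\<Sum>x\<in>UNIV. (\<bar>R x - Q x\<bar> / sqrt (w x)) * sqrt (w x))^2"
    using w_pos by (simp add: less_imp_neq[symmetric])
  also have "\<dots> \<le> (\<Sum>x\<in>UNIV. (\<bar>R x - Q x\<bar> / sqrt (w x))^2) * (\<Sum>x\<in>UNIV. (sqrt (w x))^2)"
    by (rule Cauchy_Schwarz_ineq_sum)
  also have "\<dots> = (\<Sum>x\<in>UNIV. (R x - Q x)^2 / w x) * 3"
    using w_pos R Q
    by (simp add: power_divide less_imp_le sum.distrib sum_distrib_left[symmetric] w_def is_pmf_def)
  also have "\<dots> \<le> (\<Sum>x\<in>UNIV. 2/3 * (rel_entr (R x) (Q x) - R x + Q x)) * 3"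
  proof (intro mult_right_mono sum_mono)
    fix x
    have "3*(R x - Q x)^2 / (2 * w x) \<le> rel_entr (R x) (Q x) - R x + Q x"
      unfolding w_def using R Q_pos by (intro rel_entr_lower_bound) (auto simp: is_pmf_def)
    then have "2/3 * (3*(R x - Q x)^2 / (2 * w x)) \<le> 2/3 * (rel_entr (R x) (Q x) - R x + Q x)"
      by (rule mult_left_mono) simp
    moreover have "2/3 * (3*(R x - Q x)^2 / (2 * w x)) = (R x - Q x)^2 / w x"
      by simp
    ultimately show "(R x - Q x)^2 / w x \<le> 2/3 * (rel_entr (R x) (Q x) - R x + Q x)"
      by (simp only:)
  qed simp
  also have "\<dots> = 2 * (\<Sum>x\<in>UNIV. rel_entr (R x) (Q x) - R x + Q x)"
    by (simp only: sum_distrib_left[symmetric])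
  also have "\<dots> = 2 * kl_div R Q"
    using R Q by (simp add: kl_div_eq_sum_rel_entr sum.distrib sum_subtractf is_pmf_def)
  finally show ?thesis .
qed

lemma kl_div_le_chi2_div:
  fixes R Q :: "'a::finite \<Rightarrow> real"
  assumes "is_pmf R" "is_pmf Q" "\<And>x. Q x > 0"
  shows "kl_div R Q \<le> chi2_div R Q"
proof -
  have "kl_div R Q \<le> (\<Sum>x\<in>UNIV. (R x - Q x)^2 / Q x + (R x - Q x))"
    unfolding kl_div_eq_sum_rel_entr
    using assms by (intro sum_mono rel_entr_upper_bound) (auto simp: is_pmf_def)
  also have "\<dots> = chi2_div R Q"
    using assms by (simp add: chi2_div_def sum.distrib sum_subtractf is_pmf_def)
  finally show ?thesis .
qed

lemma scaled_chi2_div_le_kl_div: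
  fixes R Q :: "'a::finite \<Rightarrow> real"
  assumes R: "is_pmf R" and Q: "is_pmf Q" and Q_pos: "\<And>x. Q x > 0" and c: "\<And>x. c \<le> Q x"
  shows "c * chi2_div R Q \<le> kl_div R Q"
proof -
  have "c * chi2_div R Q = (\<Sum>x\<in>UNIV. (c / Q x) * (R x - Q x)^2)"
    by (simp add: chi2_div_def sum_distrib_left)
  also have "\<dots> \<le> (\<Sum>x\<in>UNIV. (R x - Q x)^2)"
  proof (rule sum_mono)
    fix x
    show "(c / Q x) * (R x - Q x)^2 \<le> (R x - Q x)^2"
      using mult_right_mono[of "c / Q x" 1 "(R x - Q x)^2"] c[of x] Q_pos[of x] by simp
  qed
  also have "\<dots> \<le> (\<Sum>x\<in>UNIV. \<bar>R x - Q x\<bar>)^2 / 2"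
    using R Q by (intro sum_power2_le_half_sum_abs_power2) (simp add: sum_subtractf is_pmf_def)
  also have "\<dots> \<le> kl_div R Q"
    using pinsker_inequality[OF R Q Q_pos] by simp
  finally show ?thesis .
qed

lemma chi2_div_nonneg:
  assumes "\<And>x. Q x > 0"
  shows "0 \<le> chi2_div R Q"
  unfolding chi2_div_def using assms by (intro sum_nonneg divide_nonneg_pos) auto

lemma chi2_div_pos:
  assumes "\<And>x. Q x > 0" and "R \<noteq> Q"
  shows "0 < chi2_div R Q"
proof -
  obtain x where "R x \<noteq> Q x"
    using assms(2) by auto
  then show ?thesis
    unfolding chi2_div_def using assms(1)
    by (intro sum_pos2[where i = x]) (auto intro!: divide_nonneg_pos divide_pos_pos)
qed

lemma kl_div_pos:
  fixes R Q :: "'a::finite \<Rightarrow> real"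
  assumes "is_pmf R" "is_pmf Q" "\<And>x. Q x > 0" and "R \<noteq> Q"
  shows "0 < kl_div R Q"
proof -
  obtain x where "R x \<noteq> Q x"
    using assms(4) by auto
  then have "0 < (\<Sum>x\<in>UNIV. \<bar>R x - Q x\<bar>)"
    by (intro sum_pos2[where i = x]) auto
  then show ?thesis
    using pinsker_inequality[OF assms(1-3)] by (smt (verit) zero_less_power)
qed

lemma exists_pmf_neq:
  fixes Q :: "'a::finite \<Rightarrow> real"
  assumes "CARD('a) \<ge> 2"
  shows "\<exists>R. is_pmf R \<and> R \<noteq> Q"
proof -
  obtain a b :: 'a where "a \<noteq> b"
    using assms by (metis card_le_Suc_iff numeral_2_eq_2 insertCI)
  define \<delta> where "\<delta> c x = (if x = c then 1 else 0 :: real)" for c x :: 'a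
  have "is_pmf (\<delta> c)" for c
    by (simp add: is_pmf_def \<delta>_def)
  moreover have "\<delta> a \<noteq> \<delta> b"
    using \<open>a \<noteq> b\<close> by (metis \<delta>_def zero_neq_one)
  ultimately show ?thesis
    by metis
qed

lemma is_pmf_mixture:
  assumes Q: "is_pmf Q" and R: "is_pmf R" and "0 \<le> e" "e \<le> 1"
  shows "is_pmf (\<lambda>x. Q x + e * (R x - Q x))"
proof -
  have "Q x + e * (R x - Q x) = (1 - e) * Q x + e * R x" for x
    by (simp add: algebra_simps)
  then show ?thesis
    using assms
    by (simp add: is_pmf_def sum.distrib sum_subtractf sum_distrib_left[symmetric])
qed

lemma chi2_div_mixture: "chi2_div (\<lambda>x. Q x + e * (R x - Q x)) Q = e^2 * chi2_div R Q"
  by (simp add: chi2_div_def sum_distrib_left power_mult_distrib)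

lemma contraction_coeff_upper:
  assumes bound: "\<And>R. is_pmf R \<Longrightarrow> 0 < DivX R (marg_X P) \<Longrightarrow>
      DivY (channel_apply P R) (channel_apply P (marg_X P)) / DivX R (marg_X P) \<le> b"
    and "is_pmf R" "0 < DivX R (marg_X P)"
  shows "DivY (channel_apply P R) (channel_apply P (marg_X P)) / DivX R (marg_X P)
      \<le> contraction_coeff DivX DivY P"
  unfolding contraction_coeff_def using assms
  by (intro cSup_upper bdd_aboveI[of _ b]) auto

lemma contraction_coeff_le:
  assumes "is_pmf R\<^sub>0" "0 < DivX R\<^sub>0 (marg_X P)"
    and bound: "\<And>R. is_pmf R \<Longrightarrow> 0 < DivX R (marg_X P) \<Longrightarrow>
      DivY (channel_apply P R) (channel_apply P (marg_X P)) / DivX R (marg_X P) \<le> b"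
  shows "contraction_coeff DivX DivY P \<le> b"
  unfolding contraction_coeff_def using assms
  by (intro cSup_least) auto

locale joint_pmf =
  fixes P :: "'x::finite \<Rightarrow> 'y::finite \<Rightarrow> real"
  assumes nonneg: "\<And>x y. 0 \<le> P x y"
    and sum_eq_1: "(\<Sum>x\<in>UNIV. \<Sum>y\<in>UNIV. P x y) = 1"
    and marg_X_pos: "\<And>x. 0 < marg_X P x"
    and marg_Y_pos: "\<And>y. 0 < marg_Y P y"
begin

lemma is_pmf_marg_X: "is_pmf (marg_X P)"
  using sum_eq_1 marg_X_pos by (simp add: is_pmf_def marg_X_def less_imp_le)

lemma is_pmf_marg_Y: "is_pmf (marg_Y P)"
proof -
  have "(\<Sum>y\<in>UNIV. marg_Y P y) = 1"
    unfolding marg_Y_def using sum_eq_1 by (subst sum.swap) simp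
  then show ?thesis
    using marg_Y_pos by (simp add: is_pmf_def less_imp_le)
qed

lemma sum_channel: "(\<Sum>y\<in>UNIV. channel P y x) = 1"
  using marg_X_pos[of x]
  by (simp add: channel_def sum_divide_distrib[symmetric] marg_X_def[symmetric])

lemma channel_apply_marg_X: "channel_apply P (marg_X P) = marg_Y P"
  using marg_X_pos
  by (auto simp: fun_eq_iff channel_apply_def channel_def marg_Y_def less_imp_neq[symmetric])

lemma channel_apply_mixture:
  "channel_apply P (\<lambda>x. marg_X P x + e * (R x - marg_X P x))
     = (\<lambda>y. marg_Y P y + e * (channel_apply P R y - marg_Y P y))"
  unfolding channel_apply_marg_X[symmetric] channel_apply_def
  by (simp add: fun_eq_iff algebra_simps sum.distrib sum_subtractf sum_distrib_left)

lemma is_pmf_channel_apply: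
  assumes "is_pmf R"
  shows "is_pmf (channel_apply P R)"
proof -
  have "0 \<le> channel_apply P R y" for y
    unfolding channel_apply_def channel_def using assms nonneg marg_X_pos
    by (intro sum_nonneg mult_nonneg_nonneg divide_nonneg_pos) (auto simp: is_pmf_def)
  moreover have "(\<Sum>y\<in>UNIV. channel_apply P R y) = (\<Sum>x\<in>UNIV. (\<Sum>y\<in>UNIV. channel P y x) * R x)"
    unfolding channel_apply_def by (subst sum.swap) (simp add: sum_distrib_right)
  ultimately show ?thesis
    using assms by (simp add: is_pmf_def sum_channel)
qed

lemma chi2_data_processing:
  "chi2_div (channel_apply P R) (marg_Y P) \<le> chi2_div R (marg_X P)"
proof -
  define d where "d x = R x - marg_X P x" for x
  have diff: "channel_apply P R y - marg_Y P y = (\<Sum>x\<in>UNIV. channel P y x * d x)" for y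
    unfolding channel_apply_marg_X[symmetric] channel_apply_def d_def
    by (simp add: sum_subtractf algebra_simps)
  \<comment> \<open>Cauchy--Schwarz with weights \<open>P x y\<close>, whose sum over \<open>x\<close> is \<open>P\<^sub>Y y\<close>.\<close>
  have row_le: "(\<Sum>x\<in>UNIV. channel P y x * d x)^2 / marg_Y P y
      \<le> (\<Sum>x\<in>UNIV. channel P y x * ((d x)^2 / marg_X P x))" for y
  proof -
    have "channel P y x * d x = (sqrt (P x y) * d x / marg_X P x) * sqrt (P x y)" for x
      using nonneg[of x y] by (simp add: channel_def)
    moreover have "(sqrt (P x y) * d x / marg_X P x)^2 = channel P y x * ((d x)^2 / marg_X P x)" for x
      using nonneg[of x y] by (simp add: channel_def power_divide power_mult_distrib power2_eq_square)
    moreover have "(\<Sum>x\<in>UNIV. (sqrt (P x y))^2) = marg_Y P y"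
      using nonneg by (simp add: marg_Y_def)
    ultimately have "(\<Sum>x\<in>UNIV. channel P y x * d x)^2
        \<le> (\<Sum>x\<in>UNIV. channel P y x * ((d x)^2 / marg_X P x)) * marg_Y P y"
      using Cauchy_Schwarz_ineq_sum[of "\<lambda>x. sqrt (P x y) * d x / marg_X P x" "\<lambda>x. sqrt (P x y)" UNIV]
      by simp
    then show ?thesis
      using marg_Y_pos[of y] by (simp add: pos_divide_le_eq)
  qed
  have "chi2_div (channel_apply P R) (marg_Y P)
      = (\<Sum>y\<in>UNIV. (\<Sum>x\<in>UNIV. channel P y x * d x)^2 / marg_Y P y)"
    unfolding chi2_div_def by (simp add: diff)
  also have "\<dots> \<le> (\<Sum>y\<in>UNIV. \<Sum>x\<in>UNIV. channel P y x * ((d x)^2 / marg_X P x))"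
    by (intro sum_mono row_le)
  also have "\<dots> = (\<Sum>x\<in>UNIV. \<Sum>y\<in>UNIV. channel P y x * ((d x)^2 / marg_X P x))"
    by (rule sum.swap)
  also have "\<dots> = (\<Sum>x\<in>UNIV. (\<Sum>y\<in>UNIV. channel P y x) * ((d x)^2 / marg_X P x))"
    by (simp only: sum_distrib_right)
  also have "\<dots> = chi2_div R (marg_X P)"
    by (simp add: sum_channel chi2_div_def d_def)
  finally show ?thesis .
qed

lemma chi2_ratio_le_eta_chi2:
  assumes "is_pmf R" "0 < chi2_div R (marg_X P)"
  shows "chi2_div (channel_apply P R) (marg_Y P) / chi2_div R (marg_X P) \<le> eta_chi2 P"
proof -
  have "chi2_div (channel_apply P R') (marg_Y P) / chi2_div R' (marg_X P) \<le> 1"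
    if "0 < chi2_div R' (marg_X P)" for R'
    using that chi2_data_processing[of R'] by simp
  then show ?thesis
    unfolding eta_chi2_def
    using contraction_coeff_upper[of chi2_div P chi2_div 1] assms by (simp add: channel_apply_marg_X)
qed

lemma exists_pmf_divergences_pos:
  assumes "CARD('x) \<ge> 2"
  obtains R where "is_pmf R" "0 < chi2_div R (marg_X P)" "0 < kl_div R (marg_X P)"
  using exists_pmf_neq[OF assms] is_pmf_marg_X marg_X_pos chi2_div_pos kl_div_pos by metis

lemma eta_chi2_nonneg:
  assumes "CARD('x) \<ge> 2"
  shows "0 \<le> eta_chi2 P"
proof -
  obtain R where R: "is_pmf R" "0 < chi2_div R (marg_X P)"
    using exists_pmf_divergences_pos[OF assms] by metis
  have "0 \<le> chi2_div (channel_apply P R) (marg_Y P) / chi2_div R (marg_X P)"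
    using R(2) by (intro divide_nonneg_pos chi2_div_nonneg marg_Y_pos)
  then show ?thesis
    using chi2_ratio_le_eta_chi2[OF R] by linarith
qed

lemma kl_ratio_le_eta_chi2_div:
  assumes "CARD('x) \<ge> 2" and c: "c > 0" "\<And>x. c \<le> marg_X P x"
    and R: "is_pmf R" "0 < kl_div R (marg_X P)"
  shows "kl_div (channel_apply P R) (marg_Y P) / kl_div R (marg_X P) \<le> eta_chi2 P / c"
proof -
  have chi2_pos: "0 < chi2_div R (marg_X P)"
    using R kl_div_le_chi2_div[OF R(1) is_pmf_marg_X marg_X_pos] by linarith
  have "kl_div (channel_apply P R) (marg_Y P) \<le> chi2_div (channel_apply P R) (marg_Y P)"
    using kl_div_le_chi2_div[OF is_pmf_channel_apply[OF R(1)] is_pmf_marg_Y marg_Y_pos] .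
  also have "\<dots> \<le> eta_chi2 P * chi2_div R (marg_X P)"
    using chi2_ratio_le_eta_chi2[OF R(1) chi2_pos] chi2_pos by (simp add: pos_divide_le_eq)
  also have "\<dots> \<le> eta_chi2 P * (kl_div R (marg_X P) / c)"
    using scaled_chi2_div_le_kl_div[OF R(1) is_pmf_marg_X marg_X_pos c(2)] c(1)
    by (intro mult_left_mono eta_chi2_nonneg assms(1)) (simp add: pos_le_divide_eq mult.commute)
  finally show ?thesis
    using R(2) by (simp add: pos_divide_le_eq)
qed

lemma Min_range_marg_X: "0 < Min (range (marg_X P))" "Min (range (marg_X P)) \<le> marg_X P x"
  using Min_in[of "range (marg_X P)"] marg_X_pos by auto

lemma eta_KL_le_eta_chi2_div_Min:
  assumes "CARD('x) \<ge> 2"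
  shows "eta_KL P \<le> eta_chi2 P / Min (range (marg_X P))"
proof -
  obtain R\<^sub>0 where "is_pmf R\<^sub>0" "0 < kl_div R\<^sub>0 (marg_X P)"
    using exists_pmf_divergences_pos[OF assms] by metis
  then show ?thesis
    unfolding eta_KL_def
    by (rule contraction_coeff_le)
      (simp add: channel_apply_marg_X kl_ratio_le_eta_chi2_div[OF assms Min_range_marg_X])
qed

lemma kl_ratio_le_eta_KL:
  assumes "CARD('x) \<ge> 2" "is_pmf R" "0 < kl_div R (marg_X P)"
  shows "kl_div (channel_apply P R) (marg_Y P) / kl_div R (marg_X P) \<le> eta_KL P"
  unfolding eta_KL_def
  using contraction_coeff_upper[of kl_div P kl_div "eta_chi2 P / Min (range (marg_X P))"] assms
    kl_ratio_le_eta_chi2_div[OF assms(1) Min_range_marg_X]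
  by (simp add: channel_apply_marg_X)

lemma chi2_ratio_le_eta_KL:
  assumes "CARD('x) \<ge> 2" and R: "is_pmf R" "0 < chi2_div R (marg_X P)"
  shows "chi2_div (channel_apply P R) (marg_Y P) / chi2_div R (marg_X P) \<le> eta_KL P"
proof -
  define R\<^sub>\<epsilon> where "R\<^sub>\<epsilon> e = (\<lambda>x. marg_X P x + e * (R x - marg_X P x))" for e
  define ratio where
    "ratio e = (kl_div (channel_apply P (R\<^sub>\<epsilon> e)) (marg_Y P) / e^2) / (kl_div (R\<^sub>\<epsilon> e) (marg_X P) / e^2)"
    for e
  have "sum (channel_apply P R) UNIV = sum (marg_Y P) UNIV"
    using is_pmf_channel_apply[OF R(1)] is_pmf_marg_Y by (simp add: is_pmf_def)
  moreover have "sum R UNIV = sum (marg_X P) UNIV"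
    using R(1) is_pmf_marg_X by (simp add: is_pmf_def)
  ultimately have "(ratio \<longlongrightarrow> (chi2_div (channel_apply P R) (marg_Y P) / 2) / (chi2_div R (marg_X P) / 2)) (at 0)"
    unfolding ratio_def R\<^sub>\<epsilon>_def channel_apply_mixture using R(2)
    by (intro tendsto_divide kl_div_mixture_tendsto marg_X_pos marg_Y_pos) auto
  then have lim: "(ratio \<longlongrightarrow> chi2_div (channel_apply P R) (marg_Y P) / chi2_div R (marg_X P)) (at_right 0)"
    by (auto intro: tendsto_mono[OF at_le])
  have "\<forall>\<^sub>F e in at_right 0. e < (1::real)"
    by (rule order_tendstoD(2)[OF tendsto_ident_at]) simp
  then have "\<forall>\<^sub>F e in at_right 0. ratio e \<le> eta_KL P"
    using eventually_at_right_less[of 0]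
  proof eventually_elim
    case (elim e)
    have pmf: "is_pmf (R\<^sub>\<epsilon> e)"
      unfolding R\<^sub>\<epsilon>_def using elim by (intro is_pmf_mixture is_pmf_marg_X R(1)) auto
    have "0 < chi2_div (R\<^sub>\<epsilon> e) (marg_X P)"
      using chi2_div_mixture[of "marg_X P" e R] elim R(2) by (simp add: R\<^sub>\<epsilon>_def)
    then have "R\<^sub>\<epsilon> e \<noteq> marg_X P"
      by (auto simp: chi2_div_def)
    then have "0 < kl_div (R\<^sub>\<epsilon> e) (marg_X P)"
      by (intro kl_div_pos pmf is_pmf_marg_X marg_X_pos)
    then show ?case
      using kl_ratio_le_eta_KL[OF assms(1) pmf] elim by (simp add: ratio_def)
  qed
  then show ?thesis
    by (rule tendsto_upperbound[OF lim]) simp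
qed

lemma eta_chi2_le_eta_KL:
  assumes "CARD('x) \<ge> 2"
  shows "eta_chi2 P \<le> eta_KL P"
proof -
  obtain R\<^sub>0 where "is_pmf R\<^sub>0" "0 < chi2_div R\<^sub>0 (marg_X P)"
    using exists_pmf_divergences_pos[OF assms] by metis
  then show ?thesis
    unfolding eta_chi2_def
    by (rule contraction_coeff_le) (simp add: channel_apply_marg_X chi2_ratio_le_eta_KL[OF assms])
qed

end

theorem theorem2:
  fixes P :: "'x::finite \<Rightarrow> 'y::finite \<Rightarrow> real"
  assumes "CARD('x) \<ge> 2" and "CARD('y) \<ge> 2"
    and "\<And>x y. 0 \<le> P x y"
    and "(\<Sum>x\<in>UNIV. \<Sum>y\<in>UNIV. P x y) = 1"
    and "\<And>x. 0 < marg_X P x"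
    and "\<And>y. 0 < marg_Y P y"
  shows "eta_chi2 P \<le> eta_KL P \<and>
         eta_KL P \<le> eta_chi2 P / Min (range (marg_X P))"
proof -
  interpret joint_pmf P
    using assms(3-6) by unfold_locales
  show ?thesis
    using eta_chi2_le_eta_KL eta_KL_le_eta_chi2_div_Min assms(1) by blast
qed

end
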